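(* Let $p \in [1,\infty)$ and let $q \in (1,\infty]$ be its conjugate exponent, $1/p + 1/q = 1$ (with $q=\infty$ when $p=1$). Let $\alpha_s, \alpha_f > 0$ and let $g$ be a real scalar image. Define $$\mathcal{GHS}_p(g,\alpha_s,\alpha_f) = \max\Big\{ \langle \mathbf N, \mathbf H * g\rangle \;:\; \mathbf N \text{ a symmetric } 2\times 2 \text{ matrix image},\ \|\mathbf N\|_{\infty,S(q)} \le \alpha_s,\ \|\mathbf N * \tilde{\mathbf d}\|_{\infty,2} \le \alpha_f \Big\}.$$ Then $$\mathcal{GHS}_p(g,\alpha_s,\alpha_f) = \min_{\mathbf u}\; \alpha_f \|\mathbf d * g - \mathbf u\|_{1,2} + \alpha_s \big\| 0.5(\mathbf u * \mathbf d^t + \mathbf d * \mathbf u^t)\big\|_{1,S(p)},$$ where the minimum is over all real $2\times 1$ vector images $\mathbf u$.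
   Context: All images are real-valued arrays on a finite 2D pixel grid (indexed by $\mathbf r$), with convolution $(x*y)(\mathbf r') = \sum_{\mathbf r} x(\mathbf r) y(\mathbf r'-\mathbf r)$ taken periodically (circularly) on the grid. A vector (resp. matrix) image assigns a vector (resp. matrix) to each pixel. Convolution of vector/matrix images follows the rules of matrix multiplication: if $\mathbf X$ is an image of $m\times l$ matrices and $\mathbf Y$ of $l\times n$ matrices, $(\mathbf X*\mathbf Y)_{i,j} = \sum_{k=1}^l x_{i,k}*y_{k,j}$; convolving a matrix image with a scalar image is done entrywise; transposition is pixelwise. For a filter $h$, $\tilde h(\mathbf r) = h(-\mathbf r)$, and for a vector filter, flipping is applied componentwise. $d_x, d_y$ are discrete filters implementing $\partial/\partial x$, $\partial/\partial y$, $\mathbf d = [d_x\; d_y]^t$, and the discrete Hessian filter is $\mathbf H = \begin{bmatrix} d_{xx} & d_{xy}\\ d_{xy} & d_{yy}\end{bmatrix}$ with $d_{xx} = d_x*d_x$, $d_{yy}=d_y*d_y$, $d_{xy} = d_x*d_y$ (so $\mathbf H * g = g*\mathbf d*\mathbf d^t$). Thus $\mathbf d*\mathbf u^t$ is the $2\times2$ matrix image with $(i,j)$ entry $d_i * u_j$, and $\mathbf u * \mathbf d^t$ has $(i,j)$ entry $u_i*d_j$; $\mathbf N*\tilde{\mathbf d}$ is the $2\times 1$ vector image with $i$-th entry $\sum_j n_{i,j}*\tilde d_j$. For matrix images, $\langle \mathbf N,\mathbf M\rangle = \sum_{\mathbf r} \mathrm{Tr}(\mathbf N(\mathbf r)^t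 \mathbf M(\mathbf r))$. For a matrix $\mathbf M$, $\|\mathbf M\|_{S(p)}$ is the Schatten $p$-norm (the $\ell_p$ norm of its singular values). Mixed norms: $\|\mathbf v\|_{1,2} = \sum_{\mathbf r}\|\mathbf v(\mathbf r)\|_2$, $\|\mathbf v\|_{\infty,2} = \max_{\mathbf r}\|\mathbf v(\mathbf r)\|_2$, $\|\mathbf M\|_{1,S(p)} = \sum_{\mathbf r}\|\mathbf M(\mathbf r)\|_{S(p)}$, $\|\mathbf M\|_{\infty,S(q)} = \max_{\mathbf r}\|\mathbf M(\mathbf r)\|_{S(q)}$. *)

theory Defs
  imports "HOL-Analysis.Analysis"
begin

text \<open>Images on the periodic M x N pixel grid, pixels indexed by pairs (i,j) with
  i < M, j < N.  Values outside the grid are irrelevant (never used).\<close>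

type_synonym img = "nat \<times> nat \<Rightarrow> real"
type_synonym vimg = "nat \<times> nat \<Rightarrow> real^2"
type_synonym mimg = "nat \<times> nat \<Rightarrow> real^2^2"

definition grid :: "nat \<Rightarrow> nat \<Rightarrow> (nat \<times> nat) set" where
  "grid M N = {0..<M} \<times> {0..<N}"

definition conv :: "nat \<Rightarrow> nat \<Rightarrow> img \<Rightarrow> img \<Rightarrow> img" where
  "conv M N x y r' = (\<Sum>r\<in>grid M N. x r *
      y ((fst r' + M - fst r) mod M, (snd r' + N - snd r) mod N))"

text \<open>Flip: h~(r) = h(-r) (periodically).\<close>
definition flip :: "nat \<Rightarrow> nat \<Rightarrow> img \<Rightarrow> img" where
  "flip M N h r = h ((M - fst r mod M) mod M, (N - snd r mod N) mod N)"

text \<open>The vector filter d = [d_x d_y]^t is given as d :: 2 => img (d 1 = d_x, d 2 = d_y).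
  H * g: entry (i,j) is (d_i * d_j) * g.\<close>
definition hess_conv :: "nat \<Rightarrow> nat \<Rightarrow> (2 \<Rightarrow> img) \<Rightarrow> img \<Rightarrow> mimg" where
  "hess_conv M N d g r = (\<chi> i j. conv M N (conv M N (d i) (d j)) g r)"

definition grad_conv :: "nat \<Rightarrow> nat \<Rightarrow> (2 \<Rightarrow> img) \<Rightarrow> img \<Rightarrow> vimg" where
  "grad_conv M N d g r = (\<chi> i. conv M N (d i) g r)"

definition mat_conv_flip :: "nat \<Rightarrow> nat \<Rightarrow> mimg \<Rightarrow> (2 \<Rightarrow> img) \<Rightarrow> vimg" where
  "mat_conv_flip M N Nm d r = (\<chi> i. \<Sum>j\<in>UNIV. conv M N (\<lambda>s. Nm s $ i $ j) (flip M N (d j)) r)"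

definition sym_grad :: "nat \<Rightarrow> nat \<Rightarrow> (2 \<Rightarrow> img) \<Rightarrow> vimg \<Rightarrow> mimg" where
  "sym_grad M N d u r = (\<chi> i j. 0.5 * (conv M N (\<lambda>s. u s $ i) (d j) r
                                      + conv M N (d i) (\<lambda>s. u s $ j) r))"

definition minner :: "nat \<Rightarrow> nat \<Rightarrow> mimg \<Rightarrow> mimg \<Rightarrow> real" where
  "minner M N A B = (\<Sum>r\<in>grid M N. trace (transpose (A r) ** B r))"

text \<open>Singular values of a real 2x2 matrix A: square roots of the eigenvalues
  (roots of the characteristic polynomial t^2 - tr(B) t + det B) of B = A^t A,
  sv1 \<ge> sv2 \<ge> 0.\<close>
definition sv1 :: "real^2^2 \<Rightarrow> real" where
  "sv1 A = (let B = transpose A ** A in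
     sqrt ((trace B + sqrt ((trace B)\<^sup>2 - 4 * det B)) / 2))"

definition sv2 :: "real^2^2 \<Rightarrow> real" where
  "sv2 A = (let B = transpose A ** A in
     sqrt ((trace B - sqrt ((trace B)\<^sup>2 - 4 * det B)) / 2))"

definition schatten :: "ereal \<Rightarrow> real^2^2 \<Rightarrow> real" where
  "schatten p A = (if p = \<infinity> then max (sv1 A) (sv2 A)
                   else (sv1 A powr real_of_ereal p + sv2 A powr real_of_ereal p)
                          powr (1 / real_of_ereal p))"

definition norm_1_2 :: "nat \<Rightarrow> nat \<Rightarrow> vimg \<Rightarrow> real" where
  "norm_1_2 M N v = (\<Sum>r\<in>grid M N. norm (v r))"

definition norm_inf_2 :: "nat \<Rightarrow> nat \<Rightarrow> vimg \<Rightarrow> real" where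
  "norm_inf_2 M N v = Max ((\<lambda>r. norm (v r)) ` grid M N)"

definition norm_1_S :: "nat \<Rightarrow> nat \<Rightarrow> ereal \<Rightarrow> mimg \<Rightarrow> real" where
  "norm_1_S M N p A = (\<Sum>r\<in>grid M N. schatten p (A r))"

definition norm_inf_S :: "nat \<Rightarrow> nat \<Rightarrow> ereal \<Rightarrow> mimg \<Rightarrow> real" where
  "norm_inf_S M N q A = Max ((\<lambda>r. schatten q (A r)) ` grid M N)"

definition GHS_feasible :: "nat \<Rightarrow> nat \<Rightarrow> (2 \<Rightarrow> img) \<Rightarrow> ereal \<Rightarrow> real \<Rightarrow> real \<Rightarrow> mimg set" where
  "GHS_feasible M N d q as af = {Nm. (\<forall>r\<in>grid M N. transpose (Nm r) = Nm r)
      \<and> norm_inf_S M N q Nm \<le> as \<and> norm_inf_2 M N (mat_conv_flip M N Nm d) \<le> af}"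

text \<open>GHS_p(g, as, af), q the conjugate exponent of p; defined as the supremum,
  the statement asserts it is attained (a maximum).\<close>
definition GHS :: "nat \<Rightarrow> nat \<Rightarrow> (2 \<Rightarrow> img) \<Rightarrow> ereal \<Rightarrow> img \<Rightarrow> real \<Rightarrow> real \<Rightarrow> real" where
  "GHS M N d q g as af = Sup ((\<lambda>Nm. minner M N Nm (hess_conv M N d g)) ` GHS_feasible M N d q as af)"

definition GHS_primal :: "nat \<Rightarrow> nat \<Rightarrow> (2 \<Rightarrow> img) \<Rightarrow> real \<Rightarrow> img \<Rightarrow> real \<Rightarrow> real \<Rightarrow> vimg \<Rightarrow> real" where
  "GHS_primal M N d p g as af u =
     af * norm_1_2 M N (\<lambda>r. grad_conv M N d g r - u r) + as * norm_1_S M N (ereal p) (sym_grad M N d u)"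

end

theory Submission
  imports Defs
begin

text \<open>
  Convolving with a filter is adjoint to convolving with the flipped filter, so
  \<langle>N, H * g\<rangle> = \<langle>N * d~, d * g\<rangle>, and \<langle>N, sym_grad u\<rangle> = \<langle>N * d~, u\<rangle> for symmetric N.
  Pixelwise, Cauchy-Schwarz and Hoelder's inequality for Schatten norms (for symmetric 2x2 matrices:
  Hoelder's inequality for the eigenvalues) show that the primal objective F u is the maximum of the
  Lagrangian \<langle>y, d * g - u\<rangle> + \<langle>S, sym_grad u\<rangle> over dual variables with |y| \<le> af and
  |S|_S(q) \<le> as; taking y = N * d~ and S = N gives weak duality.

  F is continuous and coercive, so it has a minimiser u0. Strong duality is a theorem of the
  alternative on the compact convex set of dual variables: either some (y, S) with y = S * d~ has
  \<langle>y, d * g\<rangle> \<ge> F u0, and then N = S is a maximiser, or the point nearest to (0, F u0) in the image of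
  (y, S) \<mapsto> (S * d~ - y, \<langle>y, d * g\<rangle>) yields a u with F u < F u0.
\<close>

section \<open>lp norms on R^2 and Hoelder's inequality\<close>

definition lp_norm2 :: "ereal \<Rightarrow> real \<Rightarrow> real \<Rightarrow> real" where
  "lp_norm2 P x y = (if P = \<infinity> then max \<bar>x\<bar> \<bar>y\<bar>
     else (\<bar>x\<bar> powr real_of_ereal P + \<bar>y\<bar> powr real_of_ereal P) powr (1 / real_of_ereal P))"

definition conjugate_exponents :: "ereal \<Rightarrow> ereal \<Rightarrow> bool" where
  "conjugate_exponents P Q \<longleftrightarrow> 1 \<le> P \<and> 1 \<le> Q \<and> 1 / P + 1 / Q = 1"

lemma conjugate_exponents_commute: "conjugate_exponents P Q \<Longrightarrow> conjugate_exponents Q P"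
  by (simp add: conjugate_exponents_def add.commute)

lemma conjugate_exponentsE:
  assumes "conjugate_exponents P Q"
  obtains "P = \<infinity>" "Q = 1" | "P = 1" "Q = \<infinity>"
    | p q where "P = ereal p" "Q = ereal q" "1 < p" "1 < q" "1 / p + 1 / q = 1"
proof -
  have P: "1 \<le> P" and Q: "1 \<le> Q" and sum: "1 / P + 1 / Q = 1"
    using assms by (simp_all add: conjugate_exponents_def)
  consider "P = \<infinity>" | "Q = \<infinity>" | p q where "P = ereal p" "Q = ereal q" "1 \<le> p" "1 \<le> q"
    using P Q by (cases P; cases Q) auto
  then show thesis
  proof cases
    case 1
    then have "Q = 1" using sum Q by (cases Q) (auto simp: one_ereal_def)
    with 1 show thesis by (intro that(1))
  next
    case 2
    then have "P = 1" using sum P by (cases P) (auto simp: one_ereal_def)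
    with 2 show thesis by (intro that(2))
  next
    case 3
    then have pq: "1 / p + 1 / q = 1" using sum by (simp add: one_ereal_def)
    then have "p \<noteq> 1" "q \<noteq> 1" using 3 by auto
    then have "1 < p" "1 < q" using 3 by simp_all
    with 3 pq show thesis by (intro that(3))
  qed
qed

lemma conjugate_exponent_exists:
  assumes "1 \<le> Q" shows "\<exists>P. conjugate_exponents P Q"
proof (cases Q)
  case PInf
  then show ?thesis by (intro exI[of _ 1]) (simp add: conjugate_exponents_def)
next
  case (real q)
  show ?thesis
  proof (cases "q = 1")
    case True
    then show ?thesis using real by (intro exI[of _ \<infinity>]) (simp add: conjugate_exponents_def one_ereal_def)
  next
    case False
    then have q: "1 < q" using assms real by simp
    then have "1 / (q / (q - 1)) + 1 / q = 1" by (simp add: field_simps)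
    moreover have "1 \<le> q / (q - 1)" using q by (simp add: field_simps)
    ultimately show ?thesis using q real
      by (intro exI[of _ "ereal (q / (q - 1))"]) (simp add: conjugate_exponents_def one_ereal_def)
  qed
qed (use assms in simp)

lemma lp_norm2_ereal: "lp_norm2 (ereal p) x y = (\<bar>x\<bar> powr p + \<bar>y\<bar> powr p) powr (1 / p)"
  by (simp add: lp_norm2_def)

lemma lp_norm2_infinity: "lp_norm2 \<infinity> x y = max \<bar>x\<bar> \<bar>y\<bar>"
  by (simp add: lp_norm2_def)

lemma lp_norm2_one: "lp_norm2 1 x y = \<bar>x\<bar> + \<bar>y\<bar>"
  by (simp add: lp_norm2_def one_ereal_def)

lemma lp_norm2_nonneg: "0 \<le> lp_norm2 P x y"
  by (auto simp: lp_norm2_def le_max_iff_disj)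

lemma lp_norm2_abs: "lp_norm2 P \<bar>x\<bar> \<bar>y\<bar> = lp_norm2 P x y"
  by (simp add: lp_norm2_def)

lemma lp_norm2_commute: "lp_norm2 P x y = lp_norm2 P y x"
  by (simp add: lp_norm2_def add.commute max.commute)

lemma abs_le_lp_norm2:
  assumes "1 \<le> P" shows "\<bar>x\<bar> \<le> lp_norm2 P x y"
proof (cases P)
  case (real p)
  then have p: "1 \<le> p" using assms by simp
  have "\<bar>x\<bar> = (\<bar>x\<bar> powr p) powr (1 / p)" using p by (simp add: powr_powr)
  also have "\<dots> \<le> (\<bar>x\<bar> powr p + \<bar>y\<bar> powr p) powr (1 / p)" using p by (intro powr_mono2) auto
  finally show ?thesis by (simp add: real lp_norm2_ereal)
qed (use assms in \<open>auto simp: lp_norm2_infinity\<close>)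

lemma continuous_on_lp_norm2 [continuous_intros]:
  assumes "1 \<le> P" "continuous_on S f" "continuous_on S g"
  shows "continuous_on S (\<lambda>z. lp_norm2 P (f z) (g z))"
proof (cases P)
  case (real p)
  then have "0 < p" using assms(1) by simp
  then show ?thesis unfolding real lp_norm2_ereal
    by (intro continuous_on_powr' continuous_intros assms(2,3)) auto
qed (use assms in \<open>auto simp: lp_norm2_infinity intro!: continuous_intros\<close>)

lemma lp_norm2_holder_finite:
  fixes p q :: real
  assumes pq: "1 < p" "1 < q" "1 / p + 1 / q = 1"
  shows "x1 * y1 + x2 * y2 \<le> lp_norm2 (ereal q) x1 x2 * lp_norm2 (ereal p) y1 y2"
proof -
  define A where "A = lp_norm2 (ereal q) x1 x2"
  define B where "B = lp_norm2 (ereal p) y1 y2"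
  have abs: "x1 * y1 + x2 * y2 \<le> \<bar>x1\<bar> * \<bar>y1\<bar> + \<bar>x2\<bar> * \<bar>y2\<bar>"
    by (metis abs_ge_self abs_mult add_mono)
  show ?thesis
  proof (cases "A = 0 \<or> B = 0")
    case True
    then have "(x1 = 0 \<and> x2 = 0) \<or> (y1 = 0 \<and> y2 = 0)"
      using pq unfolding A_def B_def lp_norm2_ereal by (auto simp: add_nonneg_eq_0_iff)
    then show ?thesis by (auto simp: lp_norm2_nonneg)
  next
    case False
    then have A: "0 < A" and B: "0 < B"
      unfolding A_def B_def using lp_norm2_nonneg by (auto simp: order_le_less)
    have Aq: "A powr q = \<bar>x1\<bar> powr q + \<bar>x2\<bar> powr q"
      using A pq by (auto simp: A_def lp_norm2_ereal powr_powr)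
    have Bp: "B powr p = \<bar>y1\<bar> powr p + \<bar>y2\<bar> powr p"
      using B pq by (auto simp: B_def lp_norm2_ereal powr_powr)
    have young: "(\<bar>a\<bar> / A) * (\<bar>b\<bar> / B) \<le> (\<bar>a\<bar> / A) powr q / q + (\<bar>b\<bar> / B) powr p / p" for a b
      using Youngs_inequality[of q p "\<bar>a\<bar> / A" "\<bar>b\<bar> / B"] pq A B by (simp add: add.commute)
    have "(\<bar>x1\<bar> / A) * (\<bar>y1\<bar> / B) + (\<bar>x2\<bar> / A) * (\<bar>y2\<bar> / B)
       \<le> ((\<bar>x1\<bar> / A) powr q + (\<bar>x2\<bar> / A) powr q) / q + ((\<bar>y1\<bar> / B) powr p + (\<bar>y2\<bar> / B) powr p) / p"
      using young[of x1 y1] young[of x2 y2] by (simp add: add_divide_distrib)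
    also have "(\<bar>x1\<bar> / A) powr q + (\<bar>x2\<bar> / A) powr q = 1"
      using A by (simp add: powr_divide add_divide_distrib[symmetric] flip: Aq)
    also have "(\<bar>y1\<bar> / B) powr p + (\<bar>y2\<bar> / B) powr p = 1"
      using B by (simp add: powr_divide add_divide_distrib[symmetric] flip: Bp)
    finally have "(\<bar>x1\<bar> * \<bar>y1\<bar> + \<bar>x2\<bar> * \<bar>y2\<bar>) / (A * B) \<le> 1"
      using pq by (simp add: add_divide_distrib add.commute)
    then show ?thesis using A B abs unfolding A_def B_def by (simp add: divide_le_eq)
  qed
qed

lemma lp_norm2_holder:
  assumes "conjugate_exponents P Q"
  shows "x1 * y1 + x2 * y2 \<le> lp_norm2 Q x1 x2 * lp_norm2 P y1 y2"
proof -
  have abs: "x1 * y1 + x2 * y2 \<le> \<bar>x1\<bar> * \<bar>y1\<bar> + \<bar>x2\<bar> * \<bar>y2\<bar>"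
    by (metis abs_ge_self abs_mult add_mono)
  from assms show ?thesis
  proof (cases rule: conjugate_exponentsE)
    case 1
    have "\<bar>x1\<bar> * \<bar>y1\<bar> + \<bar>x2\<bar> * \<bar>y2\<bar> \<le> \<bar>x1\<bar> * max \<bar>y1\<bar> \<bar>y2\<bar> + \<bar>x2\<bar> * max \<bar>y1\<bar> \<bar>y2\<bar>"
      by (intro add_mono mult_left_mono) auto
    then show ?thesis using abs 1 by (simp add: lp_norm2_one lp_norm2_infinity algebra_simps)
  next
    case 2
    have "\<bar>x1\<bar> * \<bar>y1\<bar> + \<bar>x2\<bar> * \<bar>y2\<bar> \<le> max \<bar>x1\<bar> \<bar>x2\<bar> * \<bar>y1\<bar> + max \<bar>x1\<bar> \<bar>x2\<bar> * \<bar>y2\<bar>"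
      by (intro add_mono mult_right_mono) auto
    then show ?thesis using abs 2 by (simp add: lp_norm2_one lp_norm2_infinity algebra_simps)
  next
    case 3
    then show ?thesis using lp_norm2_holder_finite by simp
  qed
qed

lemma sgn_mult_abs_powr_mono:
  fixes a x y :: real
  assumes "0 \<le> a" "x \<le> y"
  shows "sgn x * \<bar>x\<bar> powr a \<le> sgn y * \<bar>y\<bar> powr a"
proof -
  consider "0 \<le> x" | "x < 0" "0 \<le> y" | "y < 0" using assms by force
  then show ?thesis
  proof cases
    case 1
    then show ?thesis using assms by (auto simp: sgn_if intro: powr_mono2)
  next
    case 2
    then have "sgn x * \<bar>x\<bar> powr a \<le> 0" "0 \<le> sgn y * \<bar>y\<bar> powr a" by (auto simp: sgn_if)
    then show ?thesis by linarith
  next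
    case 3
    then have "\<bar>y\<bar> powr a \<le> \<bar>x\<bar> powr a" using assms by (intro powr_mono2) auto
    then show ?thesis using 3 assms by (auto simp: sgn_if)
  qed
qed

lemma sgn_mult_abs_powr_mult_self:
  fixes p t :: real shows "sgn t * \<bar>t\<bar> powr (p - 1) * t = \<bar>t\<bar> powr p"
proof -
  have "sgn t * \<bar>t\<bar> powr (p - 1) * t = \<bar>t\<bar> * \<bar>t\<bar> powr (p - 1)" by (simp add: sgn_if)
  also have "\<dots> = \<bar>t\<bar> powr p" by (simp add: powr_mult_base)
  finally show ?thesis .
qed

lemma lp_norm2_holder_attained_finite:
  fixes p q :: real
  assumes pq: "1 < p" "1 < q" "1 / p + 1 / q = 1" and y: "y2 \<le> y1" and c: "0 \<le> c"
  shows "\<exists>x1 x2. x2 \<le> x1 \<and> lp_norm2 (ereal q) x1 x2 \<le> c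
     \<and> x1 * y1 + x2 * y2 = c * lp_norm2 (ereal p) y1 y2"
proof -
  define S where "S = \<bar>y1\<bar> powr p + \<bar>y2\<bar> powr p"
  define B where "B = S powr (1 / p)"
  show ?thesis
  proof (cases "S = 0")
    case True
    then have "y1 = 0" "y2 = 0" using pq by (auto simp: S_def add_nonneg_eq_0_iff)
    then show ?thesis using c pq by (intro exI[of _ 0]) (simp add: lp_norm2_ereal)
  next
    case False
    moreover have "0 \<le> S" unfolding S_def by simp
    ultimately have S: "0 < S" by simp
    then have B: "0 < B" and Bp: "B powr p = S" using pq by (simp_all add: B_def powr_powr)
    define x where "x t = c * (sgn t * \<bar>t\<bar> powr (p - 1)) / B powr (p - 1)" for t
    have mono: "x y2 \<le> x y1" unfolding x_def using sgn_mult_abs_powr_mono[of "p - 1" y2 y1] pq y c B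
      by (intro divide_right_mono mult_left_mono) auto
    have "x t * t = c * \<bar>t\<bar> powr p / B powr (p - 1)" for t
      using sgn_mult_abs_powr_mult_self[of t p] unfolding x_def by (simp add: field_simps)
    then have "x y1 * y1 + x y2 * y2 = c * S / B powr (p - 1)"
      unfolding S_def by (simp add: add_divide_distrib distrib_left)
    also have "\<dots> = c * B"
      using B powr_mult_base[of B "p - 1", symmetric] by (simp flip: Bp)
    finally have pairing: "x y1 * y1 + x y2 * y2 = c * B" .
    have "(p - 1) * q = p" using pq by (simp add: field_simps)
    moreover have "\<bar>x t\<bar> = c * \<bar>t\<bar> powr (p - 1) / B powr (p - 1)" for t
      unfolding x_def using c B by (simp add: abs_mult abs_sgn_eq sgn_if)
    ultimately have "\<bar>x t\<bar> powr q = c powr q * \<bar>t\<bar> powr p / S" for t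
      by (simp add: powr_mult powr_divide powr_powr Bp)
    then have "lp_norm2 (ereal q) (x y1) (x y2) = (c powr q * S / S) powr (1 / q)"
      unfolding lp_norm2_ereal S_def by (simp add: add_divide_distrib distrib_left)
    also have "\<dots> = c" using c S pq by (simp add: powr_powr)
    finally show ?thesis using mono pairing unfolding B_def S_def lp_norm2_ereal
      by (intro exI[of _ "x y1"] exI[of _ "x y2"]) auto
  qed
qed

text \<open>The order x2 \<le> x1 lets the maximiser serve as the eigenvalue pair of a symmetric matrix.\<close>
lemma lp_norm2_holder_attained:
  assumes "conjugate_exponents P Q" "y2 \<le> y1" "0 \<le> c"
  shows "\<exists>x1 x2. x2 \<le> x1 \<and> lp_norm2 Q x1 x2 \<le> c \<and> x1 * y1 + x2 * y2 = c * lp_norm2 P y1 y2"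
  using assms(1)
proof (cases rule: conjugate_exponentsE)
  case 1
  show ?thesis
  proof (cases "0 \<le> y1 + y2")
    case True
    then show ?thesis using 1 assms
      by (intro exI[of _ c] exI[of _ 0]) (auto simp: lp_norm2_one lp_norm2_infinity max_def)
  next
    case False
    then show ?thesis using 1 assms
      by (intro exI[of _ 0] exI[of _ "- c"]) (auto simp: lp_norm2_one lp_norm2_infinity max_def)
  qed
next
  case 2
  then show ?thesis using assms
    by (intro exI[of _ "c * sgn y1"] exI[of _ "c * sgn y2"])
       (auto simp: lp_norm2_one lp_norm2_infinity max_def sgn_if algebra_simps)
next
  case 3
  then show ?thesis using lp_norm2_holder_attained_finite[of _ _ y2 y1 c] assms by simp
qed

section \<open>Schatten norms of symmetric 2x2 matrices\<close>

lemma trace_transpose_mult: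
  "trace (transpose A ** B) = (\<Sum>i\<in>UNIV. \<Sum>j\<in>UNIV. A$i$j * (B::'a::comm_semiring_1^'n^'n)$i$j)"
proof -
  have "trace (transpose A ** B) = (\<Sum>j\<in>UNIV. \<Sum>i\<in>UNIV. A$i$j * B$i$j)"
    by (simp add: trace_def matrix_matrix_mult_def transpose_def)
  also have "\<dots> = (\<Sum>i\<in>UNIV. \<Sum>j\<in>UNIV. A$i$j * B$i$j)" by (rule sum.swap)
  finally show ?thesis .
qed

lemma transpose_eq_iff_2: "transpose A = A \<longleftrightarrow> (A::'a^2^2) $1$2 = A $2$1"
  by (auto simp: vec_eq_iff forall_2 transpose_def)

text \<open>A symmetric real 2x2 matrix has the eigenvalues mat_mid A + mat_rad A and mat_mid A - mat_rad A.\<close>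
definition mat_mid :: "real^2^2 \<Rightarrow> real" where
  "mat_mid A = (A$1$1 + A$2$2) / 2"

definition mat_halfdiff :: "real^2^2 \<Rightarrow> real" where
  "mat_halfdiff A = (A$1$1 - A$2$2) / 2"

definition mat_rad :: "real^2^2 \<Rightarrow> real" where
  "mat_rad A = sqrt ((mat_halfdiff A)\<^sup>2 + (A$1$2)\<^sup>2)"

lemma mat_rad_nonneg: "0 \<le> mat_rad A"
  by (simp add: mat_rad_def)

lemma mat_rad_sq: "(mat_rad A)\<^sup>2 = (mat_halfdiff A)\<^sup>2 + (A$1$2)\<^sup>2"
  by (simp add: mat_rad_def)

lemma singular_values_sym:
  assumes sym: "A$1$2 = A$2$1"
  shows "sv1 A = \<bar>mat_mid A\<bar> + mat_rad A" "sv2 A = \<bar>\<bar>mat_mid A\<bar> - mat_rad A\<bar>"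
proof -
  define m r where "m = \<bar>mat_mid A\<bar>" and "r = mat_rad A"
  have r: "0 \<le> r" "r\<^sup>2 = (mat_halfdiff A)\<^sup>2 + (A$1$2)\<^sup>2"
    unfolding r_def by (simp_all add: mat_rad_sq mat_rad_nonneg)
  have m: "m\<^sup>2 = (mat_mid A)\<^sup>2" unfolding m_def by simp
  have tr: "trace (transpose A ** A) = 2 * m\<^sup>2 + 2 * r\<^sup>2"
    unfolding trace_transpose_mult r m using sym
    by (simp add: sum_2 mat_mid_def mat_halfdiff_def power2_eq_square field_simps)
  have "det (transpose A ** A) = det A * det A" by (simp add: det_mul det_transpose)
  also have "\<dots> = (m\<^sup>2 - r\<^sup>2)\<^sup>2" unfolding r m using sym
    by (simp add: det_2 mat_mid_def mat_halfdiff_def power2_eq_square field_simps)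
  finally have det: "det (transpose A ** A) = (m\<^sup>2 - r\<^sup>2)\<^sup>2" .
  have "(2 * m\<^sup>2 + 2 * r\<^sup>2)\<^sup>2 - 4 * (m\<^sup>2 - r\<^sup>2)\<^sup>2 = (4 * m * r)\<^sup>2"
    by (simp add: power2_eq_square algebra_simps)
  then have disc: "sqrt ((2 * m\<^sup>2 + 2 * r\<^sup>2)\<^sup>2 - 4 * (m\<^sup>2 - r\<^sup>2)\<^sup>2) = 4 * m * r"
    using r by (simp add: m_def)
  have sq: "(2 * m\<^sup>2 + 2 * r\<^sup>2 + 4 * m * r) / 2 = (m + r)\<^sup>2"
    "(2 * m\<^sup>2 + 2 * r\<^sup>2 - 4 * m * r) / 2 = (m - r)\<^sup>2"
    by (simp_all add: power2_eq_square field_simps)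
  have "0 \<le> m" by (simp add: m_def)
  then show "sv1 A = m + r" "sv2 A = \<bar>m - r\<bar>"
    unfolding sv1_def sv2_def Let_def tr det disc sq using r(1) by simp_all
qed

lemma schatten_sym:
  assumes "A$1$2 = A$2$1"
  shows "schatten P A = lp_norm2 P (mat_mid A + mat_rad A) (mat_mid A - mat_rad A)"
proof -
  have "schatten P A = lp_norm2 P (\<bar>mat_mid A\<bar> + mat_rad A) \<bar>\<bar>mat_mid A\<bar> - mat_rad A\<bar>"
    using singular_values_sym[OF assms] mat_rad_nonneg[of A] by (simp add: schatten_def lp_norm2_def)
  also have "\<dots> = lp_norm2 P (mat_mid A + mat_rad A) (mat_mid A - mat_rad A)"
  proof (cases "0 \<le> mat_mid A")
    case True
    then have eq: "\<bar>mat_mid A\<bar> + mat_rad A = \<bar>mat_mid A + mat_rad A\<bar>"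
      "\<bar>\<bar>mat_mid A\<bar> - mat_rad A\<bar> = \<bar>mat_mid A - mat_rad A\<bar>"
      using mat_rad_nonneg[of A] by auto
    then show ?thesis by (simp only: eq lp_norm2_abs)
  next
    case False
    then have eq: "\<bar>mat_mid A\<bar> + mat_rad A = \<bar>mat_mid A - mat_rad A\<bar>"
      "\<bar>\<bar>mat_mid A\<bar> - mat_rad A\<bar> = \<bar>mat_mid A + mat_rad A\<bar>"
      using mat_rad_nonneg[of A] by auto
    then show ?thesis by (simp only: eq lp_norm2_abs lp_norm2_commute[of P "mat_mid A - mat_rad A"])
  qed
  finally show ?thesis .
qed

lemma schatten_sym_nonneg: "A$1$2 = A$2$1 \<Longrightarrow> 0 \<le> schatten P A"
  by (simp add: schatten_sym lp_norm2_nonneg)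

lemma trace_transpose_mult_sym:
  assumes "N$1$2 = N$2$1" "S$1$2 = S$2$1"
  shows "trace (transpose N ** S)
    = 2 * (mat_mid N * mat_mid S + mat_halfdiff N * mat_halfdiff S + N$1$2 * S$1$2)"
  unfolding trace_transpose_mult using assms by (simp add: sum_2 mat_mid_def mat_halfdiff_def field_simps)

text \<open>Von Neumann's trace inequality for symmetric 2x2 matrices, reduced to Hoelder's inequality for
  the eigenvalues by Cauchy-Schwarz on the traceless parts.\<close>
lemma schatten_holder:
  assumes "conjugate_exponents P Q" "N$1$2 = N$2$1" "S$1$2 = S$2$1"
  shows "trace (transpose N ** S) \<le> schatten Q N * schatten P S"
proof -
  have "mat_halfdiff N * mat_halfdiff S + N$1$2 * S$1$2 \<le> mat_rad N * mat_rad S"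
    using norm_cauchy_schwarz[of "(mat_halfdiff N, N$1$2)" "(mat_halfdiff S, S$1$2)"]
    by (simp add: mat_rad_def norm_Pair)
  then have "trace (transpose N ** S)
      \<le> (mat_mid N + mat_rad N) * (mat_mid S + mat_rad S)
        + (mat_mid N - mat_rad N) * (mat_mid S - mat_rad S)"
    unfolding trace_transpose_mult_sym[OF assms(2,3)] by (simp add: algebra_simps)
  also have "\<dots> \<le> schatten Q N * schatten P S"
    unfolding schatten_sym[OF assms(2)] schatten_sym[OF assms(3)] by (rule lp_norm2_holder[OF assms(1)])
  finally show ?thesis .
qed

lemma exists_unit_inner_eq_norm: "\<exists>u::real \<times> real. norm u = 1 \<and> inner u v = norm v"
proof (cases "v = 0")
  case True
  then show ?thesis by (intro exI[of _ "(1, 0)"]) simp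
next
  case False
  then show ?thesis by (intro exI[of _ "(1 / norm v) *\<^sub>R v"]) (simp add: dot_square_norm power2_eq_square)
qed

text \<open>The maximiser shares the eigenvectors of S; its eigenvalues attain Hoelder's inequality.\<close>
lemma schatten_holder_attained:
  assumes "conjugate_exponents P Q" "S$1$2 = S$2$1" "0 \<le> c"
  shows "\<exists>N. N$1$2 = N$2$1 \<and> schatten Q N \<le> c \<and> trace (transpose N ** S) = c * schatten P S"
proof -
  obtain x1 x2 where x: "x2 \<le> x1" "lp_norm2 Q x1 x2 \<le> c"
    "x1 * (mat_mid S + mat_rad S) + x2 * (mat_mid S - mat_rad S)
       = c * lp_norm2 P (mat_mid S + mat_rad S) (mat_mid S - mat_rad S)"
    using lp_norm2_holder_attained[OF assms(1) _ assms(3),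
        of "mat_mid S - mat_rad S" "mat_mid S + mat_rad S"] mat_rad_nonneg[of S]
    by auto
  obtain u where u: "(fst u)\<^sup>2 + (snd u)\<^sup>2 = 1" "fst u * mat_halfdiff S + snd u * S$1$2 = mat_rad S"
    using exists_unit_inner_eq_norm[of "(mat_halfdiff S, S$1$2)"]
    by (auto simp: norm_Pair mat_rad_def)
  define m e where "m = (x1 + x2) / 2" and "e = (x1 - x2) / 2"
  define N :: "real^2^2" where
    "N = vector [vector [m + e * fst u, e * snd u], vector [e * snd u, m - e * fst u]]"
  have N: "N$1$1 = m + e * fst u" "N$1$2 = e * snd u" "N$2$1 = e * snd u" "N$2$2 = m - e * fst u"
    by (simp_all add: N_def)
  have sym: "N$1$2 = N$2$1" by (simp add: N)
  have mid: "mat_mid N = m" and halfdiff: "mat_halfdiff N = e * fst u"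
    by (simp_all add: mat_mid_def mat_halfdiff_def N)
  have "(mat_rad N)\<^sup>2 = e\<^sup>2"
    unfolding mat_rad_sq halfdiff N using u(1) by (simp add: power_mult_distrib flip: distrib_left)
  moreover have "0 \<le> e" using x(1) by (simp add: e_def)
  ultimately have rad: "mat_rad N = e" using mat_rad_nonneg[of N] by (simp add: power2_eq_iff_nonneg)
  have schatten_N: "schatten Q N = lp_norm2 Q x1 x2"
    unfolding schatten_sym[OF sym] mid rad m_def e_def by (simp add: field_simps)
  have "trace (transpose N ** S) = 2 * (m * mat_mid S + e * mat_rad S)"
    unfolding trace_transpose_mult_sym[OF sym assms(2)] mid halfdiff N u(2)[symmetric]
    by (simp add: algebra_simps)
  also have "\<dots> = x1 * (mat_mid S + mat_rad S) + x2 * (mat_mid S - mat_rad S)"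
    by (simp add: m_def e_def field_simps)
  finally have "trace (transpose N ** S) = c * schatten P S"
    unfolding schatten_sym[OF assms(2)] x(3) .
  then show ?thesis using sym x(2) schatten_N by auto
qed

lemma trace_transpose_mult_combination:
  "trace (transpose X ** (a *\<^sub>R A + b *\<^sub>R B))
     = a * trace (transpose X ** A) + b * trace (transpose X ** (B::real^2^2))"
  unfolding trace_transpose_mult by (simp add: sum_2 algebra_simps)

text \<open>Convexity follows from the dual description of the Schatten norm as a maximum of linear
  functionals.\<close>
lemma schatten_convex:
  assumes "1 \<le> Q" "N1$1$2 = N1$2$1" "N2$1$2 = N2$2$1" "0 \<le> t" "t \<le> 1"
  shows "schatten Q ((1 - t) *\<^sub>R N1 + t *\<^sub>R N2) \<le> (1 - t) * schatten Q N1 + t * schatten Q N2"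
proof -
  obtain P where PQ: "conjugate_exponents Q P"
    using conjugate_exponent_exists[OF assms(1)] conjugate_exponents_commute by blast
  define N where "N = (1 - t) *\<^sub>R N1 + t *\<^sub>R N2"
  have "N$1$2 = N$2$1" using assms by (simp add: N_def)
  then obtain X where X: "X$1$2 = X$2$1" "schatten P X \<le> 1" "trace (transpose X ** N) = schatten Q N"
    using schatten_holder_attained[OF PQ, of N 1] by auto
  have bound: "trace (transpose X ** Ni) \<le> schatten Q Ni" if "Ni$1$2 = Ni$2$1" for Ni
  proof -
    have "trace (transpose X ** Ni) \<le> schatten P X * schatten Q Ni"
      by (rule schatten_holder[OF PQ X(1) that])
    also have "\<dots> \<le> schatten Q Ni"
      by (rule mult_left_le_one_le[OF schatten_sym_nonneg[OF that] schatten_sym_nonneg[OF X(1)] X(2)])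
    finally show ?thesis .
  qed
  have "schatten Q N = (1 - t) * trace (transpose X ** N1) + t * trace (transpose X ** N2)"
    using X(3) unfolding N_def trace_transpose_mult_combination by simp
  also have "\<dots> \<le> (1 - t) * schatten Q N1 + t * schatten Q N2"
    using bound[OF assms(2)] bound[OF assms(3)] assms(4,5) by (intro add_mono mult_left_mono) auto
  finally show ?thesis unfolding N_def .
qed

lemma continuous_on_schatten_sym:
  assumes "1 \<le> Q" shows "continuous_on {A. A$1$2 = A$2$1} (schatten Q)"
proof -
  have "continuous_on {A. A$1$2 = A$2$1} (\<lambda>A. lp_norm2 Q (mat_mid A + mat_rad A) (mat_mid A - mat_rad A))"
    unfolding mat_mid_def mat_rad_def mat_halfdiff_def by (intro continuous_intros assms) auto
  then show ?thesis by (rule continuous_on_cong[THEN iffD1, rotated 2]) (simp_all add: schatten_sym)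
qed

lemma abs_entry_le_schatten:
  assumes "1 \<le> P" "A$1$2 = A$2$1"
  shows "\<bar>A$i$j\<bar> \<le> schatten P A"
proof -
  have "\<bar>mat_mid A + mat_rad A\<bar> \<le> schatten P A" "\<bar>mat_mid A - mat_rad A\<bar> \<le> schatten P A"
    unfolding schatten_sym[OF assms(2)]
    by (rule abs_le_lp_norm2[OF assms(1)], subst lp_norm2_commute, rule abs_le_lp_norm2[OF assms(1)])
  then have eig: "\<bar>mat_mid A\<bar> + mat_rad A \<le> schatten P A"
    using mat_rad_nonneg[of A] by (cases "0 \<le> mat_mid A") auto
  have "\<bar>mat_halfdiff A\<bar> \<le> mat_rad A" "\<bar>A$1$2\<bar> \<le> mat_rad A"
    unfolding mat_rad_def by (rule real_sqrt_ge_abs1, rule real_sqrt_ge_abs2)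
  moreover have "A$1$1 = mat_mid A + mat_halfdiff A" "A$2$2 = mat_mid A - mat_halfdiff A"
    by (simp_all add: mat_mid_def mat_halfdiff_def field_simps)
  ultimately have "\<bar>A$1$1\<bar> \<le> \<bar>mat_mid A\<bar> + mat_rad A" "\<bar>A$2$2\<bar> \<le> \<bar>mat_mid A\<bar> + mat_rad A"
    "\<bar>A$1$2\<bar> \<le> \<bar>mat_mid A\<bar> + mat_rad A" "\<bar>A$2$1\<bar> \<le> \<bar>mat_mid A\<bar> + mat_rad A"
    using assms(2) by auto
  then show ?thesis using eig exhaust_2[of i] exhaust_2[of j] by auto
qed

lemma norm_le_schatten:
  assumes "1 \<le> P" "A$1$2 = A$2$1"
  shows "norm A \<le> 4 * schatten P A"
proof -
  have "norm A \<le> (\<Sum>i\<in>UNIV. norm (A$i))" unfolding norm_vec_def by (rule L2_set_le_sum) simp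
  also have "\<dots> \<le> (\<Sum>i\<in>UNIV. \<Sum>j\<in>UNIV. \<bar>A$i$j\<bar>)" by (intro sum_mono norm_le_l1_cart)
  also have "\<dots> \<le> (\<Sum>i\<in>(UNIV::2 set). \<Sum>j\<in>(UNIV::2 set). schatten P A)"
    by (intro sum_mono abs_entry_le_schatten[OF assms])
  also have "\<dots> = 4 * schatten P A" by (simp add: sum_2)
  finally show ?thesis .
qed

definition sym_schatten_ball :: "ereal \<Rightarrow> real \<Rightarrow> (real^2^2) set" where
  "sym_schatten_ball Q c = {S. S$1$2 = S$2$1 \<and> schatten Q S \<le> c}"

lemma compact_sym_schatten_ball:
  assumes "1 \<le> Q" shows "compact (sym_schatten_ball Q c)"
proof -
  have "sym_schatten_ball Q c = {S. S$1$2 = S$2$1} \<inter> schatten Q -` {..c}"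
    by (auto simp: sym_schatten_ball_def)
  moreover have "closed {S::real^2^2. S$1$2 = S$2$1}"
    by (intro closed_Collect_eq continuous_intros)
  ultimately have "closed (sym_schatten_ball Q c)"
    using continuous_closed_preimage[OF continuous_on_schatten_sym[OF assms]] by simp
  moreover have "bounded (sym_schatten_ball Q c)"
    unfolding bounded_iff sym_schatten_ball_def
    using norm_le_schatten[OF assms] by (intro exI[of _ "4 * c"]) force
  ultimately show ?thesis by (simp add: compact_eq_bounded_closed)
qed

lemma convex_sym_schatten_ball:
  assumes "1 \<le> Q" shows "convex (sym_schatten_ball Q c)"
proof (rule convexI)
  fix S T :: "real^2^2" and a b :: real
  assume S: "S \<in> sym_schatten_ball Q c" and T: "T \<in> sym_schatten_ball Q c"
    and ab: "0 \<le> a" "0 \<le> b" "a + b = 1"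
  have a: "a = 1 - b" using ab by simp
  have "schatten Q (a *\<^sub>R S + b *\<^sub>R T) \<le> a * schatten Q S + b * schatten Q T"
    using schatten_convex[OF assms, of S T b] S T ab unfolding a by (simp add: sym_schatten_ball_def)
  also have "\<dots> \<le> a * c + b * c"
    using S T ab by (intro add_mono mult_left_mono) (auto simp: sym_schatten_ball_def)
  finally show "a *\<^sub>R S + b *\<^sub>R T \<in> sym_schatten_ball Q c"
    using S T ab by (simp add: sym_schatten_ball_def distrib_right[symmetric])
qed

lemma zero_in_sym_schatten_ball: "0 \<le> c \<Longrightarrow> 0 \<in> sym_schatten_ball Q c"
  by (simp add: sym_schatten_ball_def schatten_sym mat_mid_def mat_rad_def mat_halfdiff_def lp_norm2_def)

section \<open>A theorem of the alternative\<close>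

lemma nonneg_if_forall_nonneg_add_mult:
  fixes a b :: real
  assumes "\<And>t. 0 < t \<Longrightarrow> t \<le> 1 \<Longrightarrow> 0 \<le> a + t * b"
  shows "0 \<le> a"
proof (rule ccontr)
  assume "\<not> 0 \<le> a"
  define t where "t = min 1 (- a / (2 * (\<bar>b\<bar> + 1)))"
  have t: "0 < t" "t \<le> 1" using \<open>\<not> 0 \<le> a\<close> by (auto simp: t_def divide_less_0_iff)
  have "0 < 2 * (\<bar>b\<bar> + 1)" by simp
  moreover have "t \<le> - a / (2 * (\<bar>b\<bar> + 1))" by (simp add: t_def)
  ultimately have "t * (2 * (\<bar>b\<bar> + 1)) \<le> - a" by (metis pos_le_divide_eq)
  moreover have "t * b \<le> t * \<bar>b\<bar>" using t by (simp add: mult_left_mono)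
  moreover have "t * (2 * (\<bar>b\<bar> + 1)) = 2 * (t * \<bar>b\<bar>) + 2 * t" by (simp add: algebra_simps)
  ultimately have "t * b < - a" using t \<open>\<not> 0 \<le> a\<close> by linarith
  then show False using assms[OF t] by linarith
qed

text \<open>First-order optimality of the point (w z0, c z0) nearest to (0, P) among the convex set of
  pairs (w z, c z); functions G \<Rightarrow> 'b carry the inner product of the sum.\<close>
lemma nearest_point_variational_inequality:
  fixes w :: "'z \<Rightarrow> 'i \<Rightarrow> 'b::real_inner" and c :: "'z \<Rightarrow> real"
  assumes convex: "\<And>y1 y2 t. y1 \<in> Z \<Longrightarrow> y2 \<in> Z \<Longrightarrow> 0 \<le> t \<Longrightarrow> t \<le> 1 \<Longrightarrow>
      \<exists>z\<in>Z. (\<forall>r\<in>G. w z r = (1 - t) *\<^sub>R w y1 r + t *\<^sub>R w y2 r) \<and> c z = (1 - t) * c y1 + t * c y2"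
    and nearest: "z0 \<in> Z" "\<And>z. z \<in> Z \<Longrightarrow>
      (\<Sum>r\<in>G. inner (w z0 r) (w z0 r)) + (c z0 - P)\<^sup>2 \<le> (\<Sum>r\<in>G. inner (w z r) (w z r)) + (c z - P)\<^sup>2"
    and z: "z \<in> Z"
  shows "0 \<le> (\<Sum>r\<in>G. inner (w z0 r) (w z r - w z0 r)) + (c z0 - P) * (c z - c z0)"
proof (rule nonneg_if_forall_nonneg_add_mult)
  define sq where "sq v = (\<Sum>r\<in>G. inner (v r) (v r))" for v :: "'i \<Rightarrow> 'b"
  define dw where "dw r = w z r - w z0 r" for r
  define dc where "dc = c z - c z0"
  define A where "A = (\<Sum>r\<in>G. inner (w z0 r) (dw r)) + (c z0 - P) * dc"
  fix t :: real assume t: "0 < t" "t \<le> 1"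
  obtain zt where zt: "zt \<in> Z" "\<And>r. r \<in> G \<Longrightarrow> w zt r = w z0 r + t *\<^sub>R dw r" "c zt = c z0 + t * dc"
    using convex[OF nearest(1) z, of t] t unfolding dw_def dc_def by (auto simp: algebra_simps)
  have expand: "inner (a + t *\<^sub>R b) (a + t *\<^sub>R b) = inner a a + 2 * t * inner a b + t\<^sup>2 * inner b b"
    for a b :: 'b
    by (simp add: inner_add_left inner_add_right inner_commute[of b a] power2_eq_square distrib_left)
  have "sq (w zt) = sq (w z0) + 2 * t * (\<Sum>r\<in>G. inner (w z0 r) (dw r)) + t\<^sup>2 * sq dw"
    unfolding sq_def using zt(2) by (simp add: expand sum.distrib sum_distrib_left)
  moreover have "(c zt - P)\<^sup>2 = (c z0 - P)\<^sup>2 + 2 * t * ((c z0 - P) * dc) + t\<^sup>2 * dc\<^sup>2"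
    unfolding zt(3) by (simp add: power2_eq_square algebra_simps)
  ultimately have "sq (w z0) + (c z0 - P)\<^sup>2 + t * (2 * A + t * (sq dw + dc\<^sup>2)) = sq (w zt) + (c zt - P)\<^sup>2"
    unfolding A_def by (simp add: power2_eq_square algebra_simps)
  with nearest(2)[OF zt(1)] have "0 \<le> t * (2 * A + t * (sq dw + dc\<^sup>2))"
    unfolding sq_def by linarith
  then have "0 \<le> 2 * A + t * (sq dw + dc\<^sup>2)"
    using t by (simp add: zero_le_mult_iff)
  then show "0 \<le> (\<Sum>r\<in>G. inner (w z0 r) (w z r - w z0 r)) + (c z0 - P) * (c z - c z0)
      + t * ((sq dw + dc\<^sup>2) / 2)"
    unfolding A_def dw_def dc_def by simp
qed

text \<open>If the nearest point is not (0, P) itself, the direction u = w z0 / (c z0 - P) keeps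
  c z + \<langle>w z, u\<rangle> below P on all of Z.\<close>
lemma nearest_point_separates:
  fixes w :: "'z \<Rightarrow> 'i \<Rightarrow> 'b::real_inner" and c :: "'z \<Rightarrow> real"
  assumes VI: "\<And>z. z \<in> Z \<Longrightarrow> 0 \<le> (\<Sum>r\<in>G. inner (w z0 r) (w z r - w z0 r)) + (c z0 - P) * (c z - c z0)"
    and feasible: "zf \<in> Z" "\<And>r. r \<in> G \<Longrightarrow> w zf r = 0" "c zf < P"
    and apart: "0 < (\<Sum>r\<in>G. inner (w z0 r) (w z0 r)) + (c z0 - P)\<^sup>2"
    and z: "z \<in> Z"
  shows "c z + (\<Sum>r\<in>G. inner (w z r) ((1 / (c z0 - P)) *\<^sub>R w z0 r)) < P"
proof -
  define sq where "sq = (\<Sum>r\<in>G. inner (w z0 r) (w z0 r))"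
  define e where "e = c z0 - P"
  define S where "S = (\<Sum>r\<in>G. inner (w z0 r) (w z r))"
  have Q: "0 < sq + e\<^sup>2" using apart unfolding sq_def e_def .
  have "0 \<le> - sq + e * (c zf - c z0)"
    using VI[OF feasible(1)] feasible(2) by (simp add: sq_def e_def inner_minus_right sum_negf)
  then have "sq + e\<^sup>2 \<le> e * (c zf - P)" unfolding e_def by (simp add: power2_eq_square algebra_simps)
  moreover have "e * (c zf - P) \<le> 0" if "0 \<le> e" using that feasible(3) by (simp add: mult_nonneg_nonpos)
  ultimately have e: "e < 0" using Q by force
  have "sq + e * c z0 \<le> S + e * c z"
    using VI[OF z] unfolding S_def sq_def e_def by (simp add: inner_diff_right sum_subtractf algebra_simps)
  then have "(S + e * c z) / e \<le> (sq + e * c z0) / e"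
    using e by (simp add: divide_right_mono_neg)
  moreover have "c z0 = e + P" unfolding e_def by simp
  ultimately have "c z + S / e \<le> (sq + e\<^sup>2) / e + P"
    using e by (simp add: field_simps power2_eq_square)
  moreover have "(sq + e\<^sup>2) / e < 0" using Q e by (simp add: divide_pos_neg)
  moreover have "(\<Sum>r\<in>G. inner (w z r) ((1 / e) *\<^sub>R w z0 r)) = S / e"
    unfolding S_def by (simp add: inner_commute sum_divide_distrib)
  ultimately show ?thesis unfolding e_def by linarith
qed

lemma affine_alternative:
  fixes Z :: "'z::topological_space set" and G :: "'i set"
    and w :: "'z \<Rightarrow> 'i \<Rightarrow> 'b::real_inner" and c :: "'z \<Rightarrow> real"
  assumes G: "finite G" and Z: "compact Z"
    and cont: "continuous_on Z c" "\<And>r. r \<in> G \<Longrightarrow> continuous_on Z (\<lambda>z. w z r)"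
    and convex: "\<And>y1 y2 t. y1 \<in> Z \<Longrightarrow> y2 \<in> Z \<Longrightarrow> 0 \<le> t \<Longrightarrow> t \<le> 1 \<Longrightarrow>
      \<exists>z\<in>Z. (\<forall>r\<in>G. w z r = (1 - t) *\<^sub>R w y1 r + t *\<^sub>R w y2 r) \<and> c z = (1 - t) * c y1 + t * c y2"
    and feasible: "zf \<in> Z" "\<And>r. r \<in> G \<Longrightarrow> w zf r = 0"
    and bounded_below: "\<And>u. \<exists>z\<in>Z. P \<le> c z + (\<Sum>r\<in>G. inner (w z r) (u r))"
  shows "\<exists>z\<in>Z. (\<forall>r\<in>G. w z r = 0) \<and> P \<le> c z"
proof (cases "P \<le> c zf")
  case True
  then show ?thesis using feasible by blast
next
  case False
  define Q where "Q z = (\<Sum>r\<in>G. inner (w z r) (w z r)) + (c z - P)\<^sup>2" for z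
  have "continuous_on Z Q" unfolding Q_def by (intro continuous_intros cont)
  then obtain z0 where z0: "z0 \<in> Z" "\<And>z. z \<in> Z \<Longrightarrow> Q z0 \<le> Q z"
    using continuous_attains_inf[OF Z] feasible(1) by blast
  have VI: "0 \<le> (\<Sum>r\<in>G. inner (w z0 r) (w z r - w z0 r)) + (c z0 - P) * (c z - c z0)"
    if "z \<in> Z" for z
    by (rule nearest_point_variational_inequality[OF convex z0(1) z0(2)[unfolded Q_def] that])
  have "Q z0 = 0"
  proof (rule ccontr)
    assume "Q z0 \<noteq> 0"
    moreover have "0 \<le> Q z0" unfolding Q_def by (simp add: sum_nonneg)
    ultimately have "0 < Q z0" by simp
    define u where "u r = (1 / (c z0 - P)) *\<^sub>R w z0 r" for r
    obtain z where "z \<in> Z" "P \<le> c z + (\<Sum>r\<in>G. inner (w z r) (u r))"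
      using bounded_below by blast
    moreover have "c z + (\<Sum>r\<in>G. inner (w z r) (u r)) < P" if "z \<in> Z" for z
      unfolding u_def using nearest_point_separates[OF VI feasible \<open>\<not> P \<le> c zf\<close>[unfolded not_le]
          \<open>0 < Q z0\<close>[unfolded Q_def] that] .
    ultimately show False by fastforce
  qed
  then have "(\<Sum>r\<in>G. inner (w z0 r) (w z0 r)) = 0" "c z0 = P"
    unfolding Q_def by (simp_all add: add_nonneg_eq_0_iff sum_nonneg)
  then have "\<forall>r\<in>G. w z0 r = 0" using G by (simp add: sum_nonneg_eq_0_iff)
  then show ?thesis using z0(1) \<open>c z0 = P\<close> by auto
qed

section \<open>Periodic convolution and its adjoint\<close>

definition cyclic_sub :: "nat \<Rightarrow> nat \<Rightarrow> nat \<Rightarrow> nat" where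
  "cyclic_sub M a b = (a + M - b) mod M"

lemma int_cyclic_sub: "b < M \<Longrightarrow> int (cyclic_sub M a b) = (int a - int b) mod int M"
proof -
  assume "b < M"
  then have "int (cyclic_sub M a b) = (int a - int b + int M) mod int M"
    by (simp add: cyclic_sub_def of_nat_mod of_nat_diff algebra_simps)
  then show ?thesis by simp
qed

lemma cyclic_sub_less: "0 < M \<Longrightarrow> cyclic_sub M a b < M"
  by (simp add: cyclic_sub_def)

lemma cyclic_sub_cyclic_sub:
  assumes "a < M" "b < M" shows "cyclic_sub M a (cyclic_sub M a b) = b"
proof -
  have "int (cyclic_sub M a (cyclic_sub M a b)) = (int a - (int a - int b) mod int M) mod int M"
    using assms by (simp add: int_cyclic_sub cyclic_sub_less)
  also have "\<dots> = int b" using assms by (simp add: mod_diff_right_eq)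
  finally show ?thesis by simp
qed

lemma cyclic_sub_cancel:
  assumes "b < M" "c < M" shows "cyclic_sub M (cyclic_sub M a c) (cyclic_sub M b c) = cyclic_sub M a b"
proof -
  have "int (cyclic_sub M (cyclic_sub M a c) (cyclic_sub M b c))
      = ((int a - int c) mod int M - (int b - int c) mod int M) mod int M"
    using assms by (simp add: int_cyclic_sub cyclic_sub_less)
  also have "\<dots> = int (cyclic_sub M a b)" using assms by (simp add: mod_diff_eq int_cyclic_sub)
  finally show ?thesis by simp
qed

lemma cyclic_neg_cyclic_sub:
  assumes "a < M" "b < M" shows "(M - cyclic_sub M b a mod M) mod M = cyclic_sub M a b"
proof -
  have "cyclic_sub M b a < M" using assms by (simp add: cyclic_sub_less)
  then have "int ((M - cyclic_sub M b a mod M) mod M) = (int M - (int b - int a) mod int M) mod int M"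
    using assms by (simp add: int_cyclic_sub of_nat_mod of_nat_diff)
  also have "\<dots> = (- ((int b - int a) mod int M)) mod int M" by simp
  also have "\<dots> = int (cyclic_sub M a b)" using assms by (simp add: mod_minus_eq int_cyclic_sub)
  finally show ?thesis by simp
qed

lemma cyclic_sub_add:
  assumes "a < M" "b < M" shows "cyclic_sub M ((a + b) mod M) b = a"
proof -
  have "int (cyclic_sub M ((a + b) mod M) b) = ((int a + int b) mod int M - int b) mod int M"
    using assms by (simp add: int_cyclic_sub of_nat_mod)
  also have "\<dots> = int a" using assms by (simp add: mod_diff_left_eq)
  finally show ?thesis by simp
qed

lemma cyclic_add_sub:
  assumes "a < M" "b < M" shows "(cyclic_sub M a b + b) mod M = a"
proof -
  have "int ((cyclic_sub M a b + b) mod M) = ((int a - int b) mod int M + int b) mod int M"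
    using assms by (simp add: int_cyclic_sub of_nat_mod)
  also have "\<dots> = int a" using assms by (simp add: mod_add_left_eq)
  finally show ?thesis by simp
qed

definition grid_sub :: "nat \<Rightarrow> nat \<Rightarrow> nat \<times> nat \<Rightarrow> nat \<times> nat \<Rightarrow> nat \<times> nat" where
  "grid_sub M N r s = (cyclic_sub M (fst r) (fst s), cyclic_sub N (snd r) (snd s))"

definition grid_add :: "nat \<Rightarrow> nat \<Rightarrow> nat \<times> nat \<Rightarrow> nat \<times> nat \<Rightarrow> nat \<times> nat" where
  "grid_add M N r s = ((fst r + fst s) mod M, (snd r + snd s) mod N)"

lemma mem_grid_iff: "r \<in> grid M N \<longleftrightarrow> fst r < M \<and> snd r < N"
  by (cases r) (auto simp: grid_def)

lemma finite_grid [simp]: "finite (grid M N)"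
  by (simp add: grid_def)

lemma grid_nonempty_iff: "grid M N \<noteq> {} \<longleftrightarrow> 0 < M \<and> 0 < N"
  by (auto simp: grid_def)

lemma grid_sub_in_grid: "0 < M \<Longrightarrow> 0 < N \<Longrightarrow> grid_sub M N r s \<in> grid M N"
  by (simp add: mem_grid_iff grid_sub_def cyclic_sub_less)

lemma grid_add_in_grid: "0 < M \<Longrightarrow> 0 < N \<Longrightarrow> grid_add M N r s \<in> grid M N"
  by (simp add: mem_grid_iff grid_add_def)

lemma grid_sub_grid_sub: "r \<in> grid M N \<Longrightarrow> s \<in> grid M N \<Longrightarrow> grid_sub M N r (grid_sub M N r s) = s"
  by (simp add: mem_grid_iff grid_sub_def cyclic_sub_cyclic_sub prod_eq_iff)

lemma grid_sub_cancel: "s \<in> grid M N \<Longrightarrow> t \<in> grid M N \<Longrightarrow>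
    grid_sub M N (grid_sub M N r t) (grid_sub M N s t) = grid_sub M N r s"
  by (simp add: mem_grid_iff grid_sub_def cyclic_sub_cancel)

lemma grid_sub_grid_add: "r \<in> grid M N \<Longrightarrow> s \<in> grid M N \<Longrightarrow> grid_sub M N (grid_add M N r s) s = r"
  by (simp add: mem_grid_iff grid_sub_def grid_add_def cyclic_sub_add prod_eq_iff)

lemma grid_add_grid_sub: "r \<in> grid M N \<Longrightarrow> s \<in> grid M N \<Longrightarrow> grid_add M N (grid_sub M N r s) s = r"
  by (simp add: mem_grid_iff grid_sub_def grid_add_def cyclic_add_sub prod_eq_iff)

lemma flip_grid_sub: "r \<in> grid M N \<Longrightarrow> s \<in> grid M N \<Longrightarrow> flip M N y (grid_sub M N s r) = y (grid_sub M N r s)"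
  by (simp add: mem_grid_iff grid_sub_def flip_def cyclic_neg_cyclic_sub)

lemma conv_eq_sum: "conv M N x y r = (\<Sum>s\<in>grid M N. x s * y (grid_sub M N r s))"
  by (simp add: conv_def grid_sub_def cyclic_sub_def)

lemma conv_cong:
  assumes "\<And>s. s \<in> grid M N \<Longrightarrow> x s = x' s" "\<And>s. s \<in> grid M N \<Longrightarrow> y s = y' s"
  shows "conv M N x y r = conv M N x' y' r"
proof (cases "0 < M \<and> 0 < N")
  case True
  then show ?thesis
    unfolding conv_eq_sum using assms grid_sub_in_grid[of M N] by (intro sum.cong) auto
next
  case False
  then show ?thesis by (simp add: conv_def grid_nonempty_iff[symmetric])
qed

lemma conv_commute:
  assumes r: "r \<in> grid M N" shows "conv M N x y r = conv M N y x r"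
proof -
  have MN: "0 < M" "0 < N" using r by (auto simp: mem_grid_iff)
  show ?thesis unfolding conv_eq_sum
    by (rule sum.reindex_bij_witness[where i="grid_sub M N r" and j="grid_sub M N r"])
       (auto simp: grid_sub_grid_sub[OF r] grid_sub_in_grid[OF MN] mult.commute)
qed

lemma conv_assoc:
  assumes r: "r \<in> grid M N"
  shows "conv M N (conv M N x y) z r = conv M N x (conv M N y z) r"
proof -
  have MN: "0 < M" "0 < N" using r by (auto simp: mem_grid_iff)
  have shift: "(\<Sum>s\<in>grid M N. y (grid_sub M N s t) * z (grid_sub M N r s))
      = (\<Sum>u\<in>grid M N. y u * z (grid_sub M N (grid_sub M N r t) u))" if t: "t \<in> grid M N" for t
    by (rule sum.reindex_bij_witness[where i="\<lambda>u. grid_add M N u t" and j="\<lambda>s. grid_sub M N s t"])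
       (use r t MN in \<open>auto simp: grid_sub_in_grid grid_add_in_grid grid_sub_cancel
          grid_sub_grid_add grid_add_grid_sub\<close>)
  have "conv M N (conv M N x y) z r
      = (\<Sum>t\<in>grid M N. \<Sum>s\<in>grid M N. x t * (y (grid_sub M N s t) * z (grid_sub M N r s)))"
    unfolding conv_eq_sum sum_distrib_right by (subst sum.swap) (simp add: mult.assoc)
  also have "\<dots> = conv M N x (conv M N y z) r"
    unfolding conv_eq_sum by (simp add: shift sum_distrib_left[symmetric])
  finally show ?thesis .
qed

lemma conv_swap_right: "r \<in> grid M N \<Longrightarrow> conv M N (conv M N x y) z r = conv M N (conv M N x z) y r"
proof -
  assume r: "r \<in> grid M N"
  have "conv M N x (conv M N y z) r = conv M N x (conv M N z y) r"
    by (rule conv_cong) (auto intro: conv_commute)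
  then show ?thesis by (simp add: conv_assoc[OF r])
qed

lemma sum_mult_conv_flip:
  "(\<Sum>r\<in>grid M N. z r * conv M N x y r) = (\<Sum>s\<in>grid M N. x s * conv M N z (flip M N y) s)"
proof -
  have "(\<Sum>r\<in>grid M N. z r * conv M N x y r)
      = (\<Sum>s\<in>grid M N. \<Sum>r\<in>grid M N. z r * x s * y (grid_sub M N r s))"
    unfolding conv_eq_sum sum_distrib_left by (subst sum.swap) (simp add: mult.assoc)
  also have "\<dots> = (\<Sum>s\<in>grid M N. x s * conv M N z (flip M N y) s)"
    unfolding conv_eq_sum sum_distrib_left
    by (intro sum.cong refl) (simp add: flip_grid_sub mult.commute mult.left_commute)
  finally show ?thesis .
qed

definition vinner :: "nat \<Rightarrow> nat \<Rightarrow> vimg \<Rightarrow> vimg \<Rightarrow> real" where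
  "vinner M N v w = (\<Sum>r\<in>grid M N. inner (v r) (w r))"

lemma minner_eq_sum_entries:
  "minner M N A B = (\<Sum>i\<in>UNIV. \<Sum>j\<in>UNIV. \<Sum>r\<in>grid M N. A r $i$j * B r $i$j)"
  unfolding minner_def trace_transpose_mult by (subst sum.swap, subst (2) sum.swap) (rule refl)

lemma vinner_eq_sum_entries: "vinner M N v w = (\<Sum>i\<in>UNIV. \<Sum>r\<in>grid M N. v r $ i * w r $ i)"
  unfolding vinner_def inner_vec_def by (subst sum.swap) simp

lemma vinner_mat_conv_flip:
  "vinner M N (mat_conv_flip M N Nm d) v
     = (\<Sum>i\<in>UNIV. \<Sum>j\<in>UNIV. \<Sum>s\<in>grid M N. v s $ i * conv M N (\<lambda>s. Nm s $i$j) (flip M N (d j)) s)"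
proof -
  have "vinner M N (mat_conv_flip M N Nm d) v
      = (\<Sum>i\<in>UNIV. \<Sum>s\<in>grid M N. \<Sum>j\<in>UNIV. v s $ i * conv M N (\<lambda>s. Nm s $i$j) (flip M N (d j)) s)"
    unfolding vinner_eq_sum_entries mat_conv_flip_def by (simp add: sum_distrib_left mult.commute)
  also have "\<dots> = (\<Sum>i\<in>UNIV. \<Sum>j\<in>UNIV. \<Sum>s\<in>grid M N. v s $ i * conv M N (\<lambda>s. Nm s $i$j) (flip M N (d j)) s)"
    by (intro sum.cong refl) (rule sum.swap)
  finally show ?thesis .
qed

lemma minner_hess_conv:
  "minner M N Nm (hess_conv M N d g) = vinner M N (mat_conv_flip M N Nm d) (grad_conv M N d g)"
proof -
  have "minner M N Nm (hess_conv M N d g)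
      = (\<Sum>i\<in>UNIV. \<Sum>j\<in>UNIV. \<Sum>r\<in>grid M N. Nm r $i$j * conv M N (conv M N (d i) g) (d j) r)"
    unfolding minner_eq_sum_entries hess_conv_def
    by (intro sum.cong refl) (simp add: conv_swap_right[of _ M N "d _" "d _" g])
  also have "\<dots> = vinner M N (mat_conv_flip M N Nm d) (grad_conv M N d g)"
    unfolding vinner_mat_conv_flip grad_conv_def by (subst sum_mult_conv_flip) simp
  finally show ?thesis .
qed

lemma minner_sym_grad:
  assumes sym: "\<And>r. r \<in> grid M N \<Longrightarrow> Nm r $1$2 = Nm r $2$1"
  shows "minner M N Nm (sym_grad M N d u) = vinner M N (mat_conv_flip M N Nm d) u"
proof -
  have "trace (transpose (Nm r) ** sym_grad M N d u r)
      = (\<Sum>i\<in>UNIV. \<Sum>j\<in>UNIV. Nm r $i$j * conv M N (\<lambda>s. u s $ i) (d j) r)" if r: "r \<in> grid M N" for r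
    using sym[OF r] unfolding trace_transpose_mult sym_grad_def
    by (simp add: sum_2 conv_commute[OF r, of "d _"] algebra_simps)
  then have "minner M N Nm (sym_grad M N d u)
      = (\<Sum>r\<in>grid M N. \<Sum>i\<in>UNIV. \<Sum>j\<in>UNIV. Nm r $i$j * conv M N (\<lambda>s. u s $ i) (d j) r)"
    unfolding minner_def by (rule sum.cong[OF refl])
  also have "\<dots> = (\<Sum>i\<in>UNIV. \<Sum>j\<in>UNIV. \<Sum>r\<in>grid M N. Nm r $i$j * conv M N (\<lambda>s. u s $ i) (d j) r)"
    by (subst sum.swap, subst (2) sum.swap) (rule refl)
  also have "\<dots> = vinner M N (mat_conv_flip M N Nm d) u"
    unfolding vinner_mat_conv_flip by (subst sum_mult_conv_flip) simp
  finally show ?thesis .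
qed

section \<open>The primal and dual problems\<close>

lemma compact_PiE_const:
  fixes C :: "'b::topological_space set"
  assumes "compact C" shows "compact (PiE I (\<lambda>_. C) :: ('a \<Rightarrow> 'b) set)"
proof -
  define S where "S i = (if i \<in> I then C else {undefined})" for i
  have "PiE I (\<lambda>_. C) = PiE UNIV S"
    unfolding S_def by (auto simp: PiE_iff extensional_def) (metis (full_types) singletonD)+
  moreover have "compactin (product_topology (\<lambda>_. euclidean) UNIV) (PiE UNIV S)"
    unfolding compactin_PiE using assms by (auto simp: S_def)
  ultimately show ?thesis by (simp add: euclidean_product_topology)
qed

lemma continuous_on_apply [continuous_intros]: "continuous_on S (\<lambda>u. u s)"
  by (rule continuous_on_subset[OF continuous_on_product_coordinates]) simp

lemma inner_le_mult_norm: "norm y \<le> c \<Longrightarrow> inner y v \<le> c * norm v"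
  by (metis norm_cauchy_schwarz mult_right_mono norm_ge_zero order_trans)

lemma exists_inner_eq_mult_norm:
  assumes "0 \<le> c" shows "\<exists>y. norm y \<le> c \<and> inner y v = c * norm v"
proof (cases "v = 0")
  case True
  then show ?thesis using assms by (intro exI[of _ 0]) simp
next
  case False
  then show ?thesis using assms
    by (intro exI[of _ "(c / norm v) *\<^sub>R v"]) (simp add: dot_square_norm power2_eq_square)
qed

lemma continuous_on_conv_left [continuous_intros]:
  "(\<And>s. continuous_on S (\<lambda>z. x z s)) \<Longrightarrow> continuous_on S (\<lambda>z. conv M N (x z) y r)"
  unfolding conv_def by (intro continuous_intros)

lemma continuous_on_conv_right [continuous_intros]:
  "(\<And>s. continuous_on S (\<lambda>z. y z s)) \<Longrightarrow> continuous_on S (\<lambda>z. conv M N x (y z) r)"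
  unfolding conv_def by (intro continuous_intros)

lemma conv_linear_left:
  "conv M N (\<lambda>s. a * x s + b * y s) z r = a * conv M N x z r + b * conv M N y z r"
  unfolding conv_def by (simp add: algebra_simps sum.distrib sum_distrib_left)

lemma mat_conv_flip_cong:
  "(\<And>s. s \<in> grid M N \<Longrightarrow> A s = B s) \<Longrightarrow> mat_conv_flip M N A d r = mat_conv_flip M N B d r"
  unfolding mat_conv_flip_def by (intro arg_cong[where f=vec_lambda] ext sum.cong refl conv_cong) auto

lemma mat_conv_flip_linear:
  "mat_conv_flip M N (\<lambda>s. a *\<^sub>R A s + b *\<^sub>R B s) d r
     = a *\<^sub>R mat_conv_flip M N A d r + b *\<^sub>R mat_conv_flip M N B d r"
  unfolding mat_conv_flip_def vec_eq_iff by (simp add: conv_linear_left sum.distrib sum_distrib_left)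

lemma mat_conv_flip_zero: "mat_conv_flip M N (\<lambda>_. 0) d r = 0"
  unfolding mat_conv_flip_def conv_def by (simp add: vec_eq_iff)

lemma continuous_on_mat_conv_flip [continuous_intros]:
  "(\<And>s. continuous_on S (\<lambda>z. A z s)) \<Longrightarrow> continuous_on S (\<lambda>z. mat_conv_flip M N (A z) d r)"
  unfolding mat_conv_flip_def
  by (intro continuous_intros continuous_on_vec_lambda continuous_on_component)

lemma sym_grad_cong:
  "(\<And>s. s \<in> grid M N \<Longrightarrow> u s = v s) \<Longrightarrow> sym_grad M N d u r = sym_grad M N d v r"
  unfolding sym_grad_def by (simp cong: conv_cong)

lemma sym_grad_symmetric: "r \<in> grid M N \<Longrightarrow> sym_grad M N d u r $1$2 = sym_grad M N d u r $2$1"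
  unfolding sym_grad_def by (simp add: conv_commute)

lemma continuous_on_sym_grad: "continuous_on S (\<lambda>u. sym_grad M N d u r)"
  unfolding sym_grad_def by (intro continuous_intros continuous_on_vec_lambda continuous_on_component)

lemma GHS_primal_cong:
  "(\<And>s. s \<in> grid M N \<Longrightarrow> u s = v s) \<Longrightarrow> GHS_primal M N d p g as af u = GHS_primal M N d p g as af v"
  unfolding GHS_primal_def norm_1_2_def norm_1_S_def by (simp cong: sym_grad_cong)

lemma GHS_primal_nonneg: "0 \<le> as \<Longrightarrow> 0 \<le> af \<Longrightarrow> 0 \<le> GHS_primal M N d p g as af u"
  unfolding GHS_primal_def norm_1_2_def norm_1_S_def
  by (intro add_nonneg_nonneg mult_nonneg_nonneg sum_nonneg schatten_sym_nonneg sym_grad_symmetric) auto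

lemma GHS_primal_ge_pixel:
  assumes "0 \<le> as" "0 \<le> af" "r \<in> grid M N"
  shows "af * norm (grad_conv M N d g r - u r) \<le> GHS_primal M N d p g as af u"
proof -
  have "norm (grad_conv M N d g r - u r) \<le> norm_1_2 M N (\<lambda>r. grad_conv M N d g r - u r)"
    unfolding norm_1_2_def using assms(3) by (intro member_le_sum) auto
  moreover have "0 \<le> norm_1_S M N (ereal p) (sym_grad M N d u)"
    unfolding norm_1_S_def by (intro sum_nonneg schatten_sym_nonneg sym_grad_symmetric)
  ultimately show ?thesis
    unfolding GHS_primal_def using assms(1,2) by (simp add: add_increasing2 mult_left_mono)
qed

lemma continuous_on_GHS_primal:
  assumes "1 \<le> p" shows "continuous_on S (GHS_primal M N d p g as af)"
proof -
  have "continuous_on S (\<lambda>u. schatten (ereal p) (sym_grad M N d u r))" if "r \<in> grid M N" for r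
    using assms sym_grad_symmetric[OF that]
    by (intro continuous_on_compose2[OF continuous_on_schatten_sym continuous_on_sym_grad]) auto
  then show ?thesis unfolding GHS_primal_def norm_1_2_def norm_1_S_def
    by (intro continuous_intros) auto
qed

definition lagrangian :: "nat \<Rightarrow> nat \<Rightarrow> (2 \<Rightarrow> img) \<Rightarrow> img \<Rightarrow> vimg \<Rightarrow> (nat \<times> nat \<Rightarrow> (real^2) \<times> (real^2^2)) \<Rightarrow> real"
  where "lagrangian M N d g u Y = vinner M N (\<lambda>r. fst (Y r)) (\<lambda>r. grad_conv M N d g r - u r)
     + minner M N (\<lambda>r. snd (Y r)) (sym_grad M N d u)"

definition coupling_defect :: "nat \<Rightarrow> nat \<Rightarrow> (2 \<Rightarrow> img) \<Rightarrow> (nat \<times> nat \<Rightarrow> (real^2) \<times> (real^2^2)) \<Rightarrow> vimg"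
  where "coupling_defect M N d Y r = mat_conv_flip M N (\<lambda>s. snd (Y s)) d r - fst (Y r)"

definition data_pairing :: "nat \<Rightarrow> nat \<Rightarrow> (2 \<Rightarrow> img) \<Rightarrow> img \<Rightarrow> (nat \<times> nat \<Rightarrow> (real^2) \<times> (real^2^2)) \<Rightarrow> real"
  where "data_pairing M N d g Y = vinner M N (\<lambda>r. fst (Y r)) (grad_conv M N d g)"

lemma lagrangian_eq:
  assumes "\<And>r. r \<in> grid M N \<Longrightarrow> snd (Y r) $1$2 = snd (Y r) $2$1"
  shows "lagrangian M N d g u Y = data_pairing M N d g Y + vinner M N (coupling_defect M N d Y) u"
proof -
  have "minner M N (\<lambda>r. snd (Y r)) (sym_grad M N d u) = vinner M N (mat_conv_flip M N (\<lambda>s. snd (Y s)) d) u"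
    using assms by (rule minner_sym_grad)
  then show ?thesis unfolding lagrangian_def data_pairing_def coupling_defect_def
    by (simp add: vinner_def inner_diff_left inner_diff_right sum_subtractf)
qed

lemma coupling_defect_convex_combination:
  assumes "\<And>s. s \<in> grid M N \<Longrightarrow> Y s = (1 - t) *\<^sub>R Y1 s + t *\<^sub>R Y2 s" "r \<in> grid M N"
  shows "coupling_defect M N d Y r
    = (1 - t) *\<^sub>R coupling_defect M N d Y1 r + t *\<^sub>R coupling_defect M N d Y2 r"
proof -
  have "mat_conv_flip M N (\<lambda>s. snd (Y s)) d r
      = mat_conv_flip M N (\<lambda>s. (1 - t) *\<^sub>R snd (Y1 s) + t *\<^sub>R snd (Y2 s)) d r"
    by (rule mat_conv_flip_cong) (simp add: assms(1))
  moreover have "fst (Y r) = (1 - t) *\<^sub>R fst (Y1 r) + t *\<^sub>R fst (Y2 r)" using assms by simp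
  ultimately show ?thesis unfolding coupling_defect_def mat_conv_flip_linear by (simp add: algebra_simps)
qed

lemma data_pairing_convex_combination:
  assumes "\<And>s. s \<in> grid M N \<Longrightarrow> Y s = (1 - t) *\<^sub>R Y1 s + t *\<^sub>R Y2 s"
  shows "data_pairing M N d g Y = (1 - t) * data_pairing M N d g Y1 + t * data_pairing M N d g Y2"
  unfolding data_pairing_def vinner_def
  by (simp add: assms inner_add_left sum.distrib sum_distrib_left cong: sum.cong)

lemma coupling_defect_zero:
  assumes "\<And>s. s \<in> grid M N \<Longrightarrow> Y s = 0" "r \<in> grid M N"
  shows "coupling_defect M N d Y r = 0"
proof -
  have "mat_conv_flip M N (\<lambda>s. snd (Y s)) d r = mat_conv_flip M N (\<lambda>_. 0) d r"
    by (rule mat_conv_flip_cong) (simp add: assms(1))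
  then show ?thesis using assms by (simp add: coupling_defect_def mat_conv_flip_zero)
qed

lemma continuous_on_coupling_defect: "continuous_on S (\<lambda>Y. coupling_defect M N d Y r)"
  unfolding coupling_defect_def by (intro continuous_intros)

lemma continuous_on_data_pairing: "continuous_on S (data_pairing M N d g)"
  unfolding data_pairing_def vinner_def by (intro continuous_intros)

context
  fixes M N :: nat and p :: real and q :: ereal and as af :: real and g :: img and d :: "2 \<Rightarrow> img"
  assumes MN: "0 < M" "0 < N" and pq: "conjugate_exponents (ereal p) q" and as: "0 < as" and af: "0 < af"
begin

abbreviation dual_ball :: "((real^2) \<times> (real^2^2)) set" where
  "dual_ball \<equiv> cball 0 af \<times> sym_schatten_ball q as"

lemma compact_dual_ball: "compact dual_ball"
  using pq by (simp add: compact_Times compact_sym_schatten_ball conjugate_exponents_def)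

lemma convex_dual_ball: "convex dual_ball"
  using pq by (simp add: convex_Times convex_sym_schatten_ball conjugate_exponents_def)

lemma zero_in_dual_ball: "0 \<in> dual_ball"
  using as af by (simp add: zero_prod_def zero_in_sym_schatten_ball)

lemma GHS_feasible_iff:
  "Nm \<in> GHS_feasible M N d q as af \<longleftrightarrow> (\<forall>r\<in>grid M N. (mat_conv_flip M N Nm d r, Nm r) \<in> dual_ball)"
  using MN unfolding GHS_feasible_def norm_inf_S_def norm_inf_2_def
  by (auto simp: Max_le_iff grid_nonempty_iff transpose_eq_iff_2 sym_schatten_ball_def)

lemma lagrangian_le_GHS_primal:
  assumes "\<And>r. r \<in> grid M N \<Longrightarrow> Y r \<in> dual_ball"
  shows "lagrangian M N d g u Y \<le> GHS_primal M N d p g as af u"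
proof -
  have "vinner M N (\<lambda>r. fst (Y r)) (\<lambda>r. grad_conv M N d g r - u r)
      \<le> (\<Sum>r\<in>grid M N. af * norm (grad_conv M N d g r - u r))"
    unfolding vinner_def using assms by (intro sum_mono inner_le_mult_norm) (auto simp: mem_Times_iff)
  moreover have "trace (transpose (snd (Y r)) ** sym_grad M N d u r)
      \<le> as * schatten (ereal p) (sym_grad M N d u r)" if r: "r \<in> grid M N" for r
  proof -
    have Y: "snd (Y r) $1$2 = snd (Y r) $2$1" "schatten q (snd (Y r)) \<le> as"
      using assms[OF r] by (auto simp: mem_Times_iff sym_schatten_ball_def)
    have "trace (transpose (snd (Y r)) ** sym_grad M N d u r)
        \<le> schatten q (snd (Y r)) * schatten (ereal p) (sym_grad M N d u r)"
      by (rule schatten_holder[OF pq Y(1) sym_grad_symmetric[OF r]])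
    also have "\<dots> \<le> as * schatten (ereal p) (sym_grad M N d u r)"
      using Y(2) schatten_sym_nonneg[OF sym_grad_symmetric[OF r]] by (rule mult_right_mono)
    finally show ?thesis .
  qed
  then have "minner M N (\<lambda>r. snd (Y r)) (sym_grad M N d u)
      \<le> (\<Sum>r\<in>grid M N. as * schatten (ereal p) (sym_grad M N d u r))"
    unfolding minner_def by (intro sum_mono)
  ultimately show ?thesis
    unfolding lagrangian_def GHS_primal_def norm_1_2_def norm_1_S_def by (simp add: sum_distrib_left)
qed

lemma GHS_primal_eq_lagrangian:
  "\<exists>Y\<in>PiE (grid M N) (\<lambda>_. dual_ball). lagrangian M N d g u Y = GHS_primal M N d p g as af u"
proof -
  have "\<exists>y S. (y, S) \<in> dual_ball
      \<and> inner y (grad_conv M N d g r - u r) = af * norm (grad_conv M N d g r - u r)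
      \<and> trace (transpose S ** sym_grad M N d u r) = as * schatten (ereal p) (sym_grad M N d u r)"
    if r: "r \<in> grid M N" for r
  proof -
    obtain y where "norm y \<le> af"
      "inner y (grad_conv M N d g r - u r) = af * norm (grad_conv M N d g r - u r)"
      using exists_inner_eq_mult_norm af by (meson less_imp_le)
    moreover obtain S where "S$1$2 = S$2$1" "schatten q S \<le> as"
      "trace (transpose S ** sym_grad M N d u r) = as * schatten (ereal p) (sym_grad M N d u r)"
      using schatten_holder_attained[OF pq sym_grad_symmetric[OF r]] as by (meson less_imp_le)
    ultimately show ?thesis by (auto simp: sym_schatten_ball_def)
  qed
  then obtain y S where yS: "\<And>r. r \<in> grid M N \<Longrightarrow> (y r, S r) \<in> dual_ball
      \<and> inner (y r) (grad_conv M N d g r - u r) = af * norm (grad_conv M N d g r - u r)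
      \<and> trace (transpose (S r) ** sym_grad M N d u r) = as * schatten (ereal p) (sym_grad M N d u r)"
    by metis
  define Y where "Y = restrict (\<lambda>r. (y r, S r)) (grid M N)"
  have "Y \<in> PiE (grid M N) (\<lambda>_. dual_ball)" using yS by (auto simp: Y_def)
  moreover have "lagrangian M N d g u Y = GHS_primal M N d p g as af u"
    unfolding lagrangian_def GHS_primal_def norm_1_2_def norm_1_S_def vinner_def minner_def
      sum_distrib_left
    using yS by (intro arg_cong2[where f="(+)"] sum.cong) (auto simp: Y_def)
  ultimately show ?thesis by blast
qed

lemma weak_duality:
  assumes "Nm \<in> GHS_feasible M N d q as af"
  shows "minner M N Nm (hess_conv M N d g) \<le> GHS_primal M N d p g as af u"
proof -
  define Y where "Y r = (mat_conv_flip M N Nm d r, Nm r)" for r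
  have Y: "Y r \<in> dual_ball" if "r \<in> grid M N" for r
    using assms that unfolding GHS_feasible_iff by (simp add: Y_def)
  then have "lagrangian M N d g u Y = data_pairing M N d g Y + vinner M N (coupling_defect M N d Y) u"
    by (intro lagrangian_eq) (auto simp: mem_Times_iff sym_schatten_ball_def)
  also have "\<dots> = minner M N Nm (hess_conv M N d g)"
    by (simp add: minner_hess_conv data_pairing_def coupling_defect_def vinner_def Y_def)
  finally show ?thesis using lagrangian_le_GHS_primal[of Y u] Y by simp
qed

text \<open>By coercivity (GHS_primal_ge_pixel) the minimisation reduces to a compact product of balls.\<close>
lemma GHS_primal_attains_min: "\<exists>u0. \<forall>u. GHS_primal M N d p g as af u0 \<le> GHS_primal M N d p g as af u"
proof -
  let ?F = "GHS_primal M N d p g as af" and ?G = "grid M N" and ?ag = "grad_conv M N d g"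
  define R where "R = (\<Sum>r\<in>?G. norm (?ag r)) + ?F (\<lambda>_. 0) / af"
  define C where "C = PiE ?G (\<lambda>_. cball (0::real^2) R)"
  have "0 \<le> R" unfolding R_def using GHS_primal_nonneg as af by (intro add_nonneg_nonneg sum_nonneg) auto
  then have zero: "restrict (\<lambda>_. 0) ?G \<in> C" by (auto simp: C_def)
  have "1 \<le> p" using pq by (simp add: conjugate_exponents_def)
  then have "continuous_on C ?F" by (rule continuous_on_GHS_primal)
  moreover have "compact C" unfolding C_def by (rule compact_PiE_const[OF compact_cball])
  ultimately obtain u0 where u0: "u0 \<in> C" "\<And>u. u \<in> C \<Longrightarrow> ?F u0 \<le> ?F u"
    using continuous_attains_inf[of C ?F] zero by blast
  have "?F u0 \<le> ?F u" for u
  proof (cases "\<forall>r\<in>?G. norm (u r) \<le> R")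
    case True
    then have "restrict u ?G \<in> C" by (auto simp: C_def)
    moreover have "?F (restrict u ?G) = ?F u" by (rule GHS_primal_cong) simp
    ultimately show ?thesis using u0(2)[of "restrict u ?G"] by simp
  next
    case False
    then obtain r where r: "r \<in> ?G" "R < norm (u r)" by (auto simp: not_le)
    have "norm (?ag r) \<le> (\<Sum>r\<in>?G. norm (?ag r))" using r by (intro member_le_sum) auto
    then have "?F (\<lambda>_. 0) / af < norm (?ag r - u r)"
      using r norm_triangle_ineq3[of "u r" "?ag r"] unfolding R_def by (simp add: norm_minus_commute)
    then have "?F (\<lambda>_. 0) < af * norm (?ag r - u r)" using af by (simp add: divide_less_eq mult.commute)
    also have "\<dots> \<le> ?F u"
      by (rule GHS_primal_ge_pixel[OF less_imp_le[OF as] less_imp_le[OF af] r(1)])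
    finally have "?F (\<lambda>_. 0) < ?F u" .
    moreover have "?F u0 \<le> ?F (\<lambda>_. 0)"
      using u0(2)[OF zero] GHS_primal_cong[of M N "restrict (\<lambda>_. 0) ?G" "\<lambda>_. 0"] by simp
    ultimately show ?thesis by simp
  qed
  then show ?thesis by blast
qed

lemma GHS_feasible_if_coupled:
  assumes Y: "Y \<in> PiE (grid M N) (\<lambda>_. dual_ball)"
    and coupled: "\<And>r. r \<in> grid M N \<Longrightarrow> coupling_defect M N d Y r = 0"
  shows "(\<lambda>s. snd (Y s)) \<in> GHS_feasible M N d q as af"
    and "minner M N (\<lambda>s. snd (Y s)) (hess_conv M N d g) = data_pairing M N d g Y"
proof -
  have mcf: "mat_conv_flip M N (\<lambda>s. snd (Y s)) d r = fst (Y r)" if "r \<in> grid M N" for r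
    using coupled[OF that] by (simp add: coupling_defect_def)
  show "(\<lambda>s. snd (Y s)) \<in> GHS_feasible M N d q as af"
    unfolding GHS_feasible_iff using PiE_mem[OF Y] by (simp add: mcf)
  show "minner M N (\<lambda>s. snd (Y s)) (hess_conv M N d g) = data_pairing M N d g Y"
    unfolding minner_hess_conv data_pairing_def vinner_def by (simp add: mcf)
qed

lemma strong_duality:
  assumes u0: "\<And>u. GHS_primal M N d p g as af u0 \<le> GHS_primal M N d p g as af u"
  shows "\<exists>Nm\<in>GHS_feasible M N d q as af. GHS_primal M N d p g as af u0 \<le> minner M N Nm (hess_conv M N d g)"
proof -
  let ?G = "grid M N"
  define Z where "Z = PiE ?G (\<lambda>_. dual_ball)"
  have sym: "snd (Y r) $1$2 = snd (Y r) $2$1" if "Y \<in> Z" "r \<in> ?G" for Y r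
    using PiE_mem[OF that[unfolded Z_def]] by (simp add: mem_Times_iff sym_schatten_ball_def)
  have "\<exists>Y\<in>Z. (\<forall>r\<in>?G. coupling_defect M N d Y r = 0)
      \<and> GHS_primal M N d p g as af u0 \<le> data_pairing M N d g Y"
  proof (rule affine_alternative[where zf = "restrict (\<lambda>_. 0) ?G"])
    show "compact Z" unfolding Z_def by (rule compact_PiE_const[OF compact_dual_ball])
  next
    fix Y1 Y2 and t :: real assume Y: "Y1 \<in> Z" "Y2 \<in> Z" and t: "0 \<le> t" "t \<le> 1"
    define Yt where "Yt = restrict (\<lambda>r. (1 - t) *\<^sub>R Y1 r + t *\<^sub>R Y2 r) ?G"
    have "(1 - t) *\<^sub>R Y1 r + t *\<^sub>R Y2 r \<in> dual_ball" if "r \<in> ?G" for r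
      by (rule convexD[OF convex_dual_ball]) (use Y t that in \<open>auto simp: Z_def\<close>)
    then have "Yt \<in> Z" unfolding Z_def Yt_def by auto
    then show "\<exists>Y\<in>Z. (\<forall>r\<in>?G. coupling_defect M N d Y r
          = (1 - t) *\<^sub>R coupling_defect M N d Y1 r + t *\<^sub>R coupling_defect M N d Y2 r)
        \<and> data_pairing M N d g Y = (1 - t) * data_pairing M N d g Y1 + t * data_pairing M N d g Y2"
      by (intro bexI[of _ Yt] conjI ballI coupling_defect_convex_combination
          data_pairing_convex_combination) (simp_all add: Yt_def)
  next
    fix u
    obtain Y where "Y \<in> Z" "lagrangian M N d g u Y = GHS_primal M N d p g as af u"
      using GHS_primal_eq_lagrangian[of u] unfolding Z_def by blast
    moreover from this(1) have "lagrangian M N d g u Y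
        = data_pairing M N d g Y + (\<Sum>r\<in>?G. inner (coupling_defect M N d Y r) (u r))"
      unfolding vinner_def[symmetric] by (intro lagrangian_eq sym)
    ultimately show "\<exists>Y\<in>Z. GHS_primal M N d p g as af u0
        \<le> data_pairing M N d g Y + (\<Sum>r\<in>?G. inner (coupling_defect M N d Y r) (u r))"
      using u0[of u] by (intro bexI[of _ Y]) simp_all
  qed (use zero_in_dual_ball in \<open>auto simp: Z_def coupling_defect_zero
      continuous_on_coupling_defect continuous_on_data_pairing\<close>)
  then obtain Y where "Y \<in> Z" "\<And>r. r \<in> ?G \<Longrightarrow> coupling_defect M N d Y r = 0"
    "GHS_primal M N d p g as af u0 \<le> data_pairing M N d g Y"
    by blast
  then show ?thesis using GHS_feasible_if_coupled[of Y] unfolding Z_def by metis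
qed

end

theorem proposition1:
  fixes M N :: nat and p :: real and q :: ereal and as af :: real
    and g :: img and d :: "2 \<Rightarrow> img"
  assumes "0 < M" and "0 < N"
    and "1 \<le> p" and "1 < q" and "1 / ereal p + 1 / q = 1"
    and "0 < as" and "0 < af"
  shows "(\<exists>Nm\<in>GHS_feasible M N d q as af. minner M N Nm (hess_conv M N d g) = GHS M N d q g as af)
       \<and> (\<forall>Nm\<in>GHS_feasible M N d q as af. minner M N Nm (hess_conv M N d g) \<le> GHS M N d q g as af)
       \<and> (\<exists>u. GHS_primal M N d p g as af u = GHS M N d q g as af)
       \<and> (\<forall>u. GHS M N d q g as af \<le> GHS_primal M N d p g as af u)"
proof -
  have pq: "conjugate_exponents (ereal p) q"
    using assms(3-5) by (simp add: conjugate_exponents_def)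
  note setting = assms(1,2) pq assms(6,7)
  obtain u0 where u0: "\<And>u. GHS_primal M N d p g as af u0 \<le> GHS_primal M N d p g as af u"
    using GHS_primal_attains_min[OF setting] by blast
  obtain Nm where Nm: "Nm \<in> GHS_feasible M N d q as af"
    "GHS_primal M N d p g as af u0 \<le> minner M N Nm (hess_conv M N d g)"
    using strong_duality[OF setting u0] by blast
  have weak: "minner M N Nm' (hess_conv M N d g) \<le> GHS_primal M N d p g as af u"
    if "Nm' \<in> GHS_feasible M N d q as af" for Nm' u
    by (rule weak_duality[OF setting that])
  have max: "minner M N Nm (hess_conv M N d g) = GHS_primal M N d p g as af u0"
    using Nm weak[OF Nm(1)] by (simp add: order_antisym)
  have "GHS M N d q g as af = minner M N Nm (hess_conv M N d g)"
    unfolding GHS_def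
  proof (rule cSup_eq_maximum)
    show "minner M N Nm (hess_conv M N d g)
        \<in> (\<lambda>Nm. minner M N Nm (hess_conv M N d g)) ` GHS_feasible M N d q as af"
      using Nm(1) by (rule imageI)
  qed (use weak[where u=u0] max in auto)
  then show ?thesis using Nm(1) max weak u0 by auto
qed

end
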